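(* The equation $x+y=z$ with $x,y,z\in\mathcal{B}_2$ has exactly one solution, namely $$x=y=\frac{\sqrt3-1}{2}=[\overline{2,1}],\qquad z=\sqrt3-1=[\overline{1,2}].$$
   Context: For irrational $x\in(0,1)$, $x=[a_1(x),a_2(x),\dots]$ denotes its simple continued fraction expansion; an overline denotes a periodically repeated block. $\mathcal{B}_2$ is the set of irrational $x\in(0,1)$ with $a_k(x)\le 2$ for all $k\ge1$. *)

theory Defs
  imports "HOL-Analysis.Analysis"
begin

text \<open>Gauss map and continued fraction digits of x in (0,1):
  x = [a_1(x), a_2(x), ...] with a_k(x) = floor (1 / T^(k-1) x),
  where T x = 1/x - floor (1/x).\<close>

definition gauss_map :: "real \<Rightarrow> real" where
  "gauss_map x = 1 / x - of_int \<lfloor>1 / x\<rfloor>"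

definition cf_digit :: "real \<Rightarrow> nat \<Rightarrow> int" where
  "cf_digit x k = \<lfloor>1 / (gauss_map ^^ (k - 1)) x\<rfloor>"

definition B2 :: "real set" where
  "B2 = {x. x \<notin> \<rat> \<and> 0 < x \<and> x < 1 \<and> (\<forall>k\<ge>1. cf_digit x k \<le> 2)}"

end

theory Submission
  imports Defs "HOL-Computational_Algebra.Primes"
begin

text \<open>Every x \<in> B2 is 1/(d + t) with d \<in> {1, 2} and t = gauss_map x \<in> B2. Hence M = sup B2 and
  m = inf B2 satisfy M \<le> 1/(1 + m) and m \<ge> 1/(2 + M), which forces
  M \<le> \<surd>3 - 1 and m \<ge> (\<surd>3 - 1)/2. A solution of x + y = z in B2 therefore has
  2m \<le> x + y = z \<le> M \<le> 2m, so all three inequalities are equalities; conversely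
  (\<surd>3 - 1)/2 and \<surd>3 - 1 form a 2-cycle of the Gauss map with digits 2 and 1.\<close>

lemma sqrt_prime_irrational:
  assumes "prime (p::nat)"
  shows "sqrt (real p) \<notin> \<rat>"
proof
  assume "sqrt (real p) \<in> \<rat>"
  then obtain m n :: nat
    where n: "n \<noteq> 0" and sqrt_eq: "\<bar>sqrt (real p)\<bar> = m / n" and "coprime m n"
    by (rule Rats_abs_nat_div_natE)
  have eq: "m\<^sup>2 = p * n\<^sup>2"
  proof -
    from n sqrt_eq have "real m = sqrt (real p) * n" by (simp add: field_simps)
    then have "real (m\<^sup>2) = (sqrt (real p))\<^sup>2 * n\<^sup>2" by (simp add: power_mult_distrib)
    then show ?thesis by (simp flip: of_nat_mult of_nat_power)
  qed
  have "p dvd m"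
    using eq assms by (metis dvd_triv_left prime_dvd_power)
  then obtain k where "m = p * k" ..
  with eq have "p * n\<^sup>2 = p\<^sup>2 * k\<^sup>2" by (simp add: power_mult_distrib)
  then have "n\<^sup>2 = p * k\<^sup>2"
    using assms by (simp add: power2_eq_square prime_gt_0_nat)
  then have "p dvd n"
    using assms by (metis dvd_triv_left prime_dvd_power)
  with \<open>p dvd m\<close> \<open>coprime m n\<close> assms show False
    by (metis coprime_common_divisor not_prime_unit)
qed

lemma sqrt3_irrational: "sqrt 3 \<notin> \<rat>"
  using sqrt_prime_irrational[of 3] by simp

lemma sqrt3_bounds: "1 < sqrt (3::real)" "sqrt (3::real) < 2"
proof -
  show "1 < sqrt (3::real)" by simp
  have "sqrt (3::real) < sqrt 4" by (simp only: real_sqrt_less_iff)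
  also have "sqrt 4 = (2::real)" by (rule real_sqrt_unique) simp_all
  finally show "sqrt (3::real) < 2" .
qed

lemma sqrt3_identities:
  "1 / (sqrt 3 - 1) = 1 + (sqrt 3 - 1) / (2::real)"
  "1 / ((sqrt 3 - 1) / 2) = 2 + (sqrt 3 - 1 :: real)"
  "(sqrt 3 - 1) / 2 = 1 / (1 + sqrt 3 :: real)"
proof -
  have root: "\<And>w::real. w * w = 3 \<Longrightarrow> 1 < w \<Longrightarrow>
    1 / (w - 1) = 1 + (w - 1) / 2 \<and> 1 / ((w - 1) / 2) = 2 + (w - 1) \<and> (w - 1) / 2 = 1 / (1 + w)"
    by (simp add: divide_eq_eq eq_divide_eq field_simps)
  have "sqrt 3 * sqrt 3 = (3::real)" by simp
  from root[OF this sqrt3_bounds(1)] show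
    "1 / (sqrt 3 - 1) = 1 + (sqrt 3 - 1) / (2::real)"
    "1 / ((sqrt 3 - 1) / 2) = 2 + (sqrt 3 - 1 :: real)"
    "(sqrt 3 - 1) / 2 = 1 / (1 + sqrt 3 :: real)" by blast+
qed

lemma cf_digit_gauss_map:
  assumes "k \<ge> 1"
  shows "cf_digit (gauss_map x) k = cf_digit x (Suc k)"
proof -
  have "(gauss_map ^^ (k - 1)) (gauss_map x) = (gauss_map ^^ k) x"
    using assms by (metis Suc_diff_1 funpow_Suc_right comp_apply less_eq_Suc_le One_nat_def)
  then show ?thesis unfolding cf_digit_def by simp
qed

lemma gauss_map_bounds: "0 \<le> gauss_map x" "gauss_map x < 1"
  unfolding gauss_map_def by linarith+

lemma eq_one_div_floor_plus_gauss_map: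
  "x \<noteq> 0 \<Longrightarrow> x = 1 / (of_int \<lfloor>1 / x\<rfloor> + gauss_map x)"
  unfolding gauss_map_def by simp

lemma gauss_map_irrational:
  assumes "x \<notin> \<rat>"
  shows "gauss_map x \<notin> \<rat>"
proof
  assume "gauss_map x \<in> \<rat>"
  then have "1 / (gauss_map x + of_int \<lfloor>1 / x\<rfloor>) \<in> \<rat>" by simp
  also have "gauss_map x + of_int \<lfloor>1 / x\<rfloor> = 1 / x" unfolding gauss_map_def by simp
  finally show False using assms by simp
qed

lemma floor_inverse_and_gauss_mapI:
  assumes "1 / x = of_int n + t" "0 \<le> t" "t < 1"
  shows "\<lfloor>1 / x\<rfloor> = n" and "gauss_map x = t"
proof -
  show "\<lfloor>1 / x\<rfloor> = n" using assms by (simp add: floor_eq_iff)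
  then show "gauss_map x = t" using assms(1) unfolding gauss_map_def by simp
qed

lemma cf_digit_le_if_gauss_map_invariant:
  assumes invariant: "gauss_map ` A \<subseteq> A" and digit: "\<And>y. y \<in> A \<Longrightarrow> \<lfloor>1 / y\<rfloor> \<le> N"
    and "x \<in> A"
  shows "cf_digit x k \<le> N"
proof -
  have "(gauss_map ^^ n) x \<in> A" for n
    by (induction n) (use \<open>x \<in> A\<close> invariant in auto)
  then show ?thesis unfolding cf_digit_def by (rule digit)
qed

lemma B2_gauss_map: "x \<in> B2 \<Longrightarrow> gauss_map x \<in> B2"
proof -
  assume x: "x \<in> B2"
  then have "x \<notin> \<rat>" unfolding B2_def by simp
  then have irr: "gauss_map x \<notin> \<rat>" by (rule gauss_map_irrational)
  then have "gauss_map x \<noteq> 0" by auto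
  with irr x gauss_map_bounds[of x] show ?thesis
    unfolding B2_def by (auto simp: cf_digit_gauss_map)
qed

lemma B2_first_digit:
  assumes "x \<in> B2"
  shows "\<lfloor>1 / x\<rfloor> = 1 \<or> \<lfloor>1 / x\<rfloor> = 2"
proof -
  have "0 < x" "x < 1" "cf_digit x 1 \<le> 2" using assms unfolding B2_def by auto
  then have "1 < 1 / x" "\<lfloor>1 / x\<rfloor> \<le> 2" unfolding cf_digit_def by simp_all
  then have "1 \<le> \<lfloor>1 / x\<rfloor>" "\<lfloor>1 / x\<rfloor> \<le> 2" by linarith+
  then show ?thesis by linarith
qed

lemma sup_inf_bounds_sqrt3:
  fixes m M :: real
  assumes "0 \<le> m" "m \<le> M" and upper: "M * (1 + m) \<le> 1" and lower: "1 \<le> m * (2 + M)"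
  shows "M \<le> sqrt 3 - 1" and "(sqrt 3 - 1) / 2 \<le> m"
proof -
  have "0 \<le> M" using assms by linarith
  have "M * (3 + M) = M * (2 + M) + M * 1" by (simp add: algebra_simps)
  also have "\<dots> \<le> M * (2 + M) + M * (m * (2 + M))"
    using mult_left_mono[OF lower \<open>0 \<le> M\<close>] by simp
  also have "\<dots> = M * (1 + m) * (2 + M)" by (simp add: algebra_simps)
  also have "\<dots> \<le> 2 + M"
    using mult_right_mono[OF upper, of "2 + M"] \<open>0 \<le> M\<close> by simp
  finally have "(M + 1)\<^sup>2 \<le> 3" by (simp add: power2_eq_square algebra_simps)
  then have M_le: "M + 1 \<le> sqrt 3" by (rule real_le_rsqrt)
  then show "M \<le> sqrt 3 - 1" by simp
  have "(sqrt 3 - 1) / 2 = 1 / (1 + sqrt 3)" by (rule sqrt3_identities)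
  also have "\<dots> \<le> 1 / (2 + M)" using M_le \<open>0 \<le> M\<close> by (simp add: frac_le)
  also have "\<dots> \<le> m" using lower \<open>0 \<le> M\<close> by (simp add: field_simps)
  finally show "(sqrt 3 - 1) / 2 \<le> m" .
qed

lemma subset_interval_if_cf_closed:
  fixes S :: "real set"
  assumes nonneg: "S \<subseteq> {0..}"
    and closed: "\<And>x. x \<in> S \<Longrightarrow> \<exists>d\<in>{1, 2}. \<exists>t\<in>S. x = 1 / (d + t)"
  shows "S \<subseteq> {(sqrt 3 - 1) / 2 .. sqrt 3 - 1}"
proof (cases "S = {}")
  case False
  have le_1: "x \<le> 1" if "x \<in> S" for x
    using closed[OF that] nonneg by (force simp: divide_le_eq)
  have bdd: "bdd_above S" "bdd_below S"
    using le_1 nonneg unfolding bdd_above_def bdd_below_def by auto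
  define m M where "m = Inf S" and "M = Sup S"
  have mem_bounds: "m \<le> x" "x \<le> M" if "x \<in> S" for x
    unfolding m_def M_def using that bdd by (auto intro: cInf_lower cSup_upper)
  have "0 \<le> m" unfolding m_def using False nonneg by (force intro: cInf_greatest)
  have "x \<le> 1 / (1 + m)" "1 / (2 + M) \<le> x" if "x \<in> S" for x
  proof -
    obtain d t where d: "d \<in> {1, 2}" and "t \<in> S" and x_eq: "x = 1 / (d + t)"
      using closed \<open>x \<in> S\<close> by blast
    then have "m \<le> t" "t \<le> M" by (auto intro: mem_bounds)
    with d \<open>0 \<le> m\<close> show "x \<le> 1 / (1 + m)" "1 / (2 + M) \<le> x"
      unfolding x_eq by (auto intro!: frac_le)
  qed
  then have "M \<le> 1 / (1 + m)" "1 / (2 + M) \<le> m"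
    unfolding m_def M_def using False by (auto intro: cSup_least cInf_greatest)
  moreover have "m \<le> M" using False mem_bounds by fastforce
  ultimately have "M \<le> sqrt 3 - 1" "(sqrt 3 - 1) / 2 \<le> m"
    using sup_inf_bounds_sqrt3[of m M] \<open>0 \<le> m\<close> by (simp_all add: field_simps)
  with mem_bounds show ?thesis by force
qed simp

lemma B2_subset_interval: "B2 \<subseteq> {(sqrt 3 - 1) / 2 .. sqrt 3 - 1}"
proof (rule subset_interval_if_cf_closed)
  show "B2 \<subseteq> {0..}" unfolding B2_def by auto
  fix x assume "x \<in> B2"
  then have "x \<noteq> 0" "of_int \<lfloor>1 / x\<rfloor> \<in> {1, 2 :: real}"
    using B2_first_digit unfolding B2_def by auto
  with \<open>x \<in> B2\<close> show "\<exists>d\<in>{1, 2}. \<exists>t\<in>B2. x = 1 / (d + t)"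
    by (metis B2_gauss_map eq_one_div_floor_plus_gauss_map)
qed

lemma gauss_map_sqrt3_orbit:
  "gauss_map (sqrt 3 - 1) = (sqrt 3 - 1) / 2" "\<lfloor>1 / (sqrt 3 - 1 :: real)\<rfloor> = 1"
  "gauss_map ((sqrt 3 - 1) / 2) = sqrt 3 - 1" "\<lfloor>1 / ((sqrt 3 - 1) / 2 :: real)\<rfloor> = 2"
proof -
  have "1 / (sqrt 3 - 1) = of_int 1 + (sqrt 3 - 1) / (2::real)"
    using sqrt3_identities(1) by simp
  from floor_inverse_and_gauss_mapI[OF this]
  show "gauss_map (sqrt 3 - 1) = (sqrt 3 - 1) / 2" "\<lfloor>1 / (sqrt 3 - 1 :: real)\<rfloor> = 1"
    using sqrt3_bounds by auto
  have "1 / ((sqrt 3 - 1) / 2) = of_int 2 + (sqrt 3 - 1 :: real)"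
    using sqrt3_identities(2) by simp
  from floor_inverse_and_gauss_mapI[OF this]
  show "gauss_map ((sqrt 3 - 1) / 2) = sqrt 3 - 1" "\<lfloor>1 / ((sqrt 3 - 1) / 2 :: real)\<rfloor> = 2"
    using sqrt3_bounds by auto
qed

lemma sqrt3_orbit_subset_B2: "{(sqrt 3 - 1) / 2, sqrt 3 - 1} \<subseteq> B2"
proof -
  let ?A = "{(sqrt 3 - 1) / 2, sqrt 3 - 1 :: real}"
  have "gauss_map ` ?A \<subseteq> ?A" by (simp add: gauss_map_sqrt3_orbit)
  moreover have "\<lfloor>1 / y\<rfloor> \<le> 2" if "y \<in> ?A" for y
    using that by (elim insertE emptyE) (simp_all only: gauss_map_sqrt3_orbit order_refl one_le_numeral)
  ultimately have "cf_digit x k \<le> 2" if "x \<in> ?A" for x k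
    using that by (rule cf_digit_le_if_gauss_map_invariant)
  moreover have "x \<notin> \<rat>" if "x \<in> ?A" for x
  proof
    assume "x \<in> \<rat>"
    then have "2 * x + 1 \<in> \<rat>" "x + 1 \<in> \<rat>" by simp_all
    moreover from that have "sqrt 3 = 2 * x + 1 \<or> sqrt 3 = x + 1" by auto
    ultimately show False using sqrt3_irrational by auto
  qed
  ultimately show ?thesis unfolding B2_def using sqrt3_bounds by auto
qed

theorem mainTheorem4:
  shows "{(x, y, z). x \<in> B2 \<and> y \<in> B2 \<and> z \<in> B2 \<and> x + y = z}
         = {((sqrt 3 - 1) / 2, (sqrt 3 - 1) / 2, sqrt 3 - 1)}"
proof (intro set_eqI iffI)
  fix p assume "p \<in> {(x, y, z). x \<in> B2 \<and> y \<in> B2 \<and> z \<in> B2 \<and> x + y = z}"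
  then obtain x y z where p: "p = (x, y, z)" and "x \<in> B2" "y \<in> B2" "z \<in> B2" "x + y = z"
    by auto
  then have "(sqrt 3 - 1) / 2 \<le> x" "(sqrt 3 - 1) / 2 \<le> y" "z \<le> sqrt 3 - 1"
    using B2_subset_interval by auto
  with \<open>x + y = z\<close> show "p \<in> {((sqrt 3 - 1) / 2, (sqrt 3 - 1) / 2, sqrt 3 - 1)}"
    unfolding p by auto
next
  fix p assume "p \<in> {((sqrt 3 - 1) / 2, (sqrt 3 - 1) / 2, sqrt 3 - 1)}"
  with sqrt3_orbit_subset_B2
  show "p \<in> {(x, y, z). x \<in> B2 \<and> y \<in> B2 \<and> z \<in> B2 \<and> x + y = z}" by auto
qed

end
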